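(* Let $\mathbb{F}\in\{\mathbb{R},\mathbb{C}\}$, $A\in\mathbb{F}^{m\times n}$ with $\|A\|_{\infty,col}\le1$, $\mu>0$, $x_0\in\mathbb{F}^n$ with $S=\mathrm{supp}\,x_0$ and $\#S=K$, $\epsilon\in\mathbb{F}^m$, $b=Ax_0+\epsilon$, and assume $\beta_K>0$. If $\|\epsilon\|_2<\sqrt{\mu}$ and $$|x_{0,j}|>\sqrt{\mu}+\frac{\|\epsilon\|_2}{\beta_K}\quad\text{for all }j\in S,$$ then the oracle solution $x'=x_S$ is a strict local minimizer of $\mathcal{K}_{reg}$ with $\mathrm{supp}(x')=\mathrm{supp}(x_0)$. Moreover $|x'_j|>\sqrt{\mu}$ for $j\in S$, $\|Ax'-b\|_2\le\|\epsilon\|_2$, and $\|x'-x_0\|_2\le\|\epsilon\|_2/\beta_K$.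
   Context: $\|A\|_{\infty,col}=\max_i\|a_i\|_2$ over the columns $a_i$ of $A$. $\mathrm{card}(x)$ is the number of nonzero entries; $\beta_k=\inf\{\|Ax\|_2/\|x\|_2:x\ne0,\ \mathrm{card}(x)\le k\}$. $\mathcal{K}_{reg}(x)=\mathcal{Q}_2(\mu\,\mathrm{card})(x)+\|Ax-b\|_2^2$ with $\mathcal{Q}_2(\mu\,\mathrm{card})(x)=\sum_{j=1}^n\big(\mu-(\max\{\sqrt{\mu}-|x_j|,0\})^2\big)$. $A_S$ denotes $A$ with all columns with index outside $S$ set to zero, and the oracle solution is $x_S=(A_S^*A_S)^\dagger A_S^*b$ (the least squares solution of $A_Sx=b$ supported in $S$), where $\dagger$ is the Moore–Penrose inverse and $A^*$ the conjugate transpose. *)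

theory Defs
  imports "HOL-Analysis.Analysis" "HOL-Library.Extended_Real"
begin

text \<open>Scalar field F in {R, C}: a normed field with a conjugation satisfying
  x * cnjg x = |x|^2.  Its instances are exactly (up to isomorphism) R (cnjg = id)
  and C (cnjg = complex conjugation).\<close>

class rclike = real_normed_field +
  fixes cnjg :: "'a \<Rightarrow> 'a"
  assumes cnjg_add: "cnjg (x + y) = cnjg x + cnjg y"
    and cnjg_mult: "cnjg (x * y) = cnjg x * cnjg y"
    and cnjg_cnjg: "cnjg (cnjg x) = x"
    and cnjg_scaleR: "cnjg (r *\<^sub>R x) = r *\<^sub>R cnjg x"
    and mult_cnjg: "x * cnjg x = (norm x)\<^sup>2 *\<^sub>R 1"

instantiation real :: rclike
begin
definition cnjg_real :: "real \<Rightarrow> real" where "cnjg_real x = x"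
instance by standard (simp_all add: cnjg_real_def power2_eq_square)
end

instantiation complex :: rclike
begin
definition cnjg_complex :: "complex \<Rightarrow> complex" where "cnjg_complex = cnj"
instance by standard (simp_all add: cnjg_complex_def complex_mult_cnj scaleR_conv_of_real cmod_power2 flip: of_real_power of_real_add)
end

definition ctrans :: "'a::rclike^'n^'m \<Rightarrow> 'a^'m^'n" where
  "ctrans A = (\<chi> j i. cnjg (A $ i $ j))"

definition pinv :: "'a::rclike^'n^'m \<Rightarrow> 'a^'m^'n" where
  "pinv A = (THE X. A ** X ** A = A \<and> X ** A ** X = X \<and>
                    ctrans (A ** X) = A ** X \<and> ctrans (X ** A) = X ** A)"

definition supp :: "'a::zero^'n \<Rightarrow> 'n set" where
  "supp x = {j. x $ j \<noteq> 0}"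

definition cardv :: "'a::zero^'n \<Rightarrow> nat" where
  "cardv x = card (supp x)"

definition colnorm_max :: "'a::real_normed_vector^'n^'m \<Rightarrow> real" where
  "colnorm_max A = Max (range (\<lambda>j. norm (column j A)))"

text \<open>beta_k (as an extended real, so that the infimum over the empty set, k = 0, is +infinity)\<close>
definition beta :: "nat \<Rightarrow> 'a::rclike^'n^'m \<Rightarrow> ereal" where
  "beta k A = (INF x\<in>{x. x \<noteq> 0 \<and> cardv x \<le> k}. ereal (norm (A *v x) / norm x))"

definition restrict_cols :: "'a::zero^'n^'m \<Rightarrow> 'n set \<Rightarrow> 'a^'n^'m" where
  "restrict_cols A S = (\<chi> i j. if j \<in> S then A $ i $ j else 0)"

definition oracle_sol :: "'a::rclike^'n^'m \<Rightarrow> 'n set \<Rightarrow> 'a^'m \<Rightarrow> 'a^'n" where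
  "oracle_sol A S b = pinv (ctrans (restrict_cols A S) ** restrict_cols A S)
                    *v (ctrans (restrict_cols A S) *v b)"

definition Q2card :: "real \<Rightarrow> 'a::real_normed_vector^'n \<Rightarrow> real" where
  "Q2card \<mu> x = (\<Sum>j\<in>UNIV. \<mu> - (max (sqrt \<mu> - norm (x $ j)) 0)\<^sup>2)"

definition Kreg :: "real \<Rightarrow> 'a::rclike^'n^'m \<Rightarrow> 'a^'m \<Rightarrow> 'a^'n \<Rightarrow> real" where
  "Kreg \<mu> A b x = Q2card \<mu> x + (norm (A *v x - b))\<^sup>2"

definition strict_local_min :: "('v::metric_space \<Rightarrow> real) \<Rightarrow> 'v \<Rightarrow> bool" where
  "strict_local_min f x0 \<longleftrightarrow> (\<exists>\<delta>>0. \<forall>x. x \<noteq> x0 \<and> dist x x0 < \<delta> \<longrightarrow> f x0 < f x)"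

end

theory Submission
  imports Defs
begin

text \<open>
  The oracle solution \<open>x\<close> is the least-squares fit of \<open>b\<close> by the columns in \<open>S\<close>, so its
  residual \<open>r = A x - b\<close> is orthogonal to \<open>A v\<close> for every \<open>v\<close> supported in \<open>S\<close>.
  Pythagoras applied to \<open>-\<epsilon> = A (x0 - x) + r\<close> gives \<open>|r| \<le> |\<epsilon>|\<close> and
  \<open>|A (x - x0)| \<le> |\<epsilon>|\<close>, hence \<open>|x - x0| \<le> |\<epsilon>| / \<beta>\<^sub>K\<close>, and the gap assumption on
  \<open>x0\<close> yields \<open>|x\<^sub>j| > \<surd>\<mu>\<close> on \<open>S\<close>.

  Near \<open>x\<close> the penalty is therefore constant in the coordinates in \<open>S\<close> and grows at least
  like \<open>2 \<surd>\<mu> t - t\<^sup>2\<close> in a coordinate \<open>t\<close> outside \<open>S\<close>, whereas the data term can drop by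
  at most \<open>2 |r|\<close> times the sum of these \<open>t\<close>, as the columns of \<open>A\<close> have norm at most 1.
  Since \<open>|r| < \<surd>\<mu>\<close>, the penalty wins for small perturbations leaving \<open>S\<close>; perturbations
  inside \<open>S\<close> strictly increase the residual, because \<open>\<beta>\<^sub>K > 0\<close> makes \<open>A\<close> injective on
  vectors supported in \<open>S\<close>.
\<close>

lemma cnjg_zero [simp]: "cnjg 0 = (0::'a::rclike)"
  by (metis add_cancel_right_right cnjg_add)

lemma cnjg_one [simp]: "cnjg 1 = (1::'a::rclike)"
  using mult_cnjg[of "1::'a"] by simp

lemma cnjg_sum: "cnjg (sum f A) = (\<Sum>i\<in>A. cnjg (f i :: 'a::rclike))"
  by (induction A rule: infinite_finite_induct) (auto simp: cnjg_add)

definition cinner :: "'a::rclike^'n::finite \<Rightarrow> 'a^'n \<Rightarrow> 'a" where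
  "cinner u v = (\<Sum>i\<in>UNIV. cnjg (u $ i) * v $ i)"

lemma cinner_self: "cinner u u = of_real ((norm u)\<^sup>2)"
proof -
  have "cinner u u = (\<Sum>i\<in>UNIV. of_real ((norm (u $ i))\<^sup>2))"
    unfolding cinner_def by (metis mult.commute mult_cnjg of_real_def)
  also have "\<dots> = of_real ((norm u)\<^sup>2)"
    by (simp add: norm_vec_def L2_set_def sum_nonneg)
  finally show ?thesis .
qed

lemma cinner_commute: "cinner v u = cnjg (cinner u v)"
  unfolding cinner_def cnjg_sum by (simp add: cnjg_mult cnjg_cnjg mult.commute)

lemma cinner_ctrans: "cinner u (ctrans B *v z) = cinner (B *v u) z"
proof -
  have "cinner u (ctrans B *v z) = (\<Sum>j\<in>UNIV. \<Sum>i\<in>UNIV. cnjg (u $ j) * (cnjg (B $ i $ j) * z $ i))"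
    unfolding cinner_def matrix_vector_mult_def ctrans_def by (simp add: sum_distrib_left)
  also have "\<dots> = (\<Sum>i\<in>UNIV. \<Sum>j\<in>UNIV. cnjg (u $ j) * (cnjg (B $ i $ j) * z $ i))"
    by (rule sum.swap)
  also have "\<dots> = cinner (B *v u) z"
    unfolding cinner_def matrix_vector_mult_def
    by (simp add: cnjg_sum sum_distrib_left sum_distrib_right cnjg_mult mult_ac)
  finally show ?thesis .
qed

lemma norm_add_sq_if_cinner_zero:
  assumes "cinner u v = 0"
  shows "(norm (u + v))\<^sup>2 = (norm u)\<^sup>2 + (norm v)\<^sup>2"
proof -
  have "cinner v u = 0"
    using assms cinner_commute[of v u] by simp
  then have "cinner (u + v) (u + v) = cinner u u + cinner v v"
    using assms unfolding cinner_def by (simp add: cnjg_add algebra_simps sum.distrib)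
  then have "(of_real ((norm (u + v))\<^sup>2) :: 'a) = of_real ((norm u)\<^sup>2 + (norm v)\<^sup>2)"
    by (simp only: cinner_self of_real_add)
  then show ?thesis
    by (rule of_real_eq_iff[THEN iffD1])
qed

lemma norm_add_sq_if_ctrans_zero:
  assumes "ctrans B *v r = 0"
  shows "(norm (B *v v + r))\<^sup>2 = (norm (B *v v))\<^sup>2 + (norm r)\<^sup>2"
  by (rule norm_add_sq_if_cinner_zero)
    (use cinner_ctrans[of v B r] in \<open>simp add: assms cinner_def\<close>)

lemma ctrans_mult: "ctrans (A ** B) = ctrans B ** ctrans (A::'a::rclike^'n::finite^'m::finite)"
  unfolding ctrans_def matrix_matrix_mult_def
  by (simp add: vec_eq_iff cnjg_sum cnjg_mult mult.commute)

lemma pinv_eq: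
  fixes A :: "'a::rclike^'n::finite^'m::finite"
  assumes "A ** X ** A = A" "X ** A ** X = X" "ctrans (A ** X) = A ** X" "ctrans (X ** A) = X ** A"
  shows "pinv A = X"
  unfolding pinv_def
proof (rule the_equality)
  fix Y
  assume "A ** Y ** A = A \<and> Y ** A ** Y = Y \<and> ctrans (A ** Y) = A ** Y \<and>
    ctrans (Y ** A) = Y ** A"
  then have Y: "A ** Y ** A = A" "Y ** A ** Y = Y" "ctrans (A ** Y) = A ** Y"
    "ctrans (Y ** A) = Y ** A"
    by auto
  have "Y = ctrans (Y ** A) ** Y"
    using Y(2,4) by simp
  also have "\<dots> = ctrans (X ** A) ** ctrans (Y ** A) ** Y"
    using assms(1) by (metis ctrans_mult matrix_mul_assoc)
  also have "\<dots> = X ** A ** Y"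
    using assms(4) Y(2,4) by (metis matrix_mul_assoc)
  finally have Y_eq: "Y = X ** A ** Y" .
  have "X = X ** ctrans (A ** X)"
    using assms(2,3) by (simp add: matrix_mul_assoc)
  also have "\<dots> = X ** ctrans (A ** X) ** ctrans (A ** Y)"
    using Y(1) by (metis ctrans_mult matrix_mul_assoc)
  also have "\<dots> = X ** A ** Y"
    using assms(2,3) Y(3) by (metis matrix_mul_assoc)
  finally show "Y = X"
    using Y_eq by simp
qed (use assms in blast)

definition coord_proj :: "'n::finite set \<Rightarrow> 'a::semiring_1^'n^'n" where
  "coord_proj S = (\<chi> i j. of_bool (i = j \<and> j \<in> S))"

lemma coord_proj_mult_vec: "(coord_proj S *v v) $ j = (if j \<in> S then v $ j else 0)"
  unfolding coord_proj_def matrix_vector_mult_def by (simp add: Collect_conv_if2)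

lemma supp_subset_iff_coord_proj: "supp v \<subseteq> S \<longleftrightarrow> coord_proj S *v v = v"
  by (auto simp: supp_def vec_eq_iff coord_proj_mult_vec)

lemma coord_proj_mult: "coord_proj S ** coord_proj T = coord_proj (S \<inter> T)"
  unfolding coord_proj_def matrix_matrix_mult_def
  by (auto simp: vec_eq_iff Collect_conv_if Collect_conv_if2 Int_insert_left)

lemma coord_proj_empty [simp]: "coord_proj {} = 0"
  by (simp add: coord_proj_def zero_vec_def)

lemma coord_proj_add_compl: "coord_proj S + coord_proj (- S) = mat 1"
  unfolding coord_proj_def mat_def by (simp add: vec_eq_iff)

lemma ctrans_coord_proj: "ctrans (coord_proj S) = coord_proj S"
  unfolding ctrans_def coord_proj_def by (simp add: vec_eq_iff)

lemma restrict_cols_eq_mult_coord_proj: "restrict_cols A S = A ** coord_proj S"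
  unfolding restrict_cols_def coord_proj_def matrix_matrix_mult_def by (simp add: vec_eq_iff)

lemma restrict_cols_mult_vec: "supp v \<subseteq> S \<Longrightarrow> restrict_cols A S *v v = A *v v"
  by (simp add: restrict_cols_eq_mult_coord_proj supp_subset_iff_coord_proj
      flip: matrix_vector_mul_assoc)

lemma matrix_add_rdistrib: "(B + C) ** A = B ** A + C ** A"
  by (vector matrix_matrix_mult_def sum.distrib[symmetric] field_simps)

lemma matrix_diff_ldistrib: "(A::'a::ring_1^'n^'m) ** (B - C) = A ** B - A ** C"
  by (vector matrix_matrix_mult_def sum_subtractf[symmetric] field_simps)

lemma matrix_diff_rdistrib: "(B - C) ** (A::'a::ring_1^'n^'m) = B ** A - C ** A"
  by (vector matrix_matrix_mult_def sum_subtractf[symmetric] field_simps)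

text \<open>The Moore--Penrose inverse here is \<open>B - Q\<close>: the inverse of \<open>M\<close> on the range of \<open>P\<close>,
  extended by zero on the range of \<open>Q\<close>.\<close>

lemma pinv_compression:
  fixes M P Q :: "'a::rclike^'n::finite^'n"
  assumes PQ: "P + Q = mat 1" "P ** Q = 0" "Q ** P = 0" and "ctrans P = P"
    and M: "P ** M = M" "M ** P = M"
    and B: "B ** (M + Q) = mat 1"
  shows "M ** pinv M = P" "pinv M ** M = P" "P ** pinv M = pinv M"
proof -
  have B': "(M + Q) ** B = mat 1"
    using B matrix_left_right_inverse by blast
  have QQ: "Q ** Q = Q"
    by (metis PQ(1,2) add_0 matrix_add_rdistrib matrix_mul_lid)
  have MQ: "M ** Q = 0"
    using M(2) PQ(2) by (metis matrix_mul_assoc times0_right)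
  have QM: "Q ** M = 0"
    using M(1) PQ(3) by (metis matrix_mul_assoc times0_left)
  have QB: "Q ** B = Q"
    by (metis B' QM QQ add_0 matrix_add_ldistrib matrix_mul_assoc matrix_mul_rid)
  have BQ: "B ** Q = Q"
    by (metis B MQ QQ add_0 matrix_add_rdistrib matrix_mul_assoc matrix_mul_lid)
  have P_eq: "P = mat 1 - Q"
    using PQ(1) by (simp add: eq_diff_eq)
  have MX: "M ** (B - Q) = P" and XM: "(B - Q) ** M = P" and PX: "P ** (B - Q) = B - Q"
    using B B' QB BQ MQ QM
    by (simp_all add: P_eq matrix_diff_ldistrib matrix_diff_rdistrib matrix_add_ldistrib
        matrix_add_rdistrib QQ eq_diff_eq)
  have "pinv M = B - Q"
    by (rule pinv_eq) (simp_all add: MX XM PX M \<open>ctrans P = P\<close> flip: matrix_mul_assoc)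
  then show "M ** pinv M = P" "pinv M ** M = P" "P ** pinv M = pinv M"
    using MX XM PX by simp_all
qed

lemma gram_restrict_cols:
  "ctrans (restrict_cols A S) ** restrict_cols A S = coord_proj S ** (ctrans A ** A) ** coord_proj S"
  by (simp add: restrict_cols_eq_mult_coord_proj ctrans_mult ctrans_coord_proj matrix_mul_assoc)

lemma gram_add_coord_proj_compl_left_invertible:
  fixes A :: "'a::rclike^'n::finite^'m::finite"
  assumes inj: "\<And>v. supp v \<subseteq> S \<Longrightarrow> A *v v = 0 \<Longrightarrow> v = 0"
  shows "\<exists>B. B ** (ctrans (restrict_cols A S) ** restrict_cols A S + coord_proj (- S)) = mat 1"
  unfolding matrix_left_invertible_ker
proof (intro allI impI)
  fix y
  define G where "G = ctrans (restrict_cols A S) ** restrict_cols A S"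
  assume "(ctrans (restrict_cols A S) ** restrict_cols A S + coord_proj (- S)) *v y = 0"
  then have y: "(G + coord_proj (- S)) *v y = 0"
    by (simp add: G_def)
  have "coord_proj S ** (G + coord_proj (- S)) = G"
    by (simp add: G_def gram_restrict_cols matrix_add_ldistrib matrix_mul_assoc coord_proj_mult)
  then have Gy: "G *v y = 0"
    using y by (metis matrix_vector_mul_assoc matrix_vector_mult_0_right)
  then have "coord_proj (- S) *v y = 0"
    using y by (simp add: matrix_vector_mult_add_rdistrib)
  then have "coord_proj S *v y = y"
    using coord_proj_add_compl[of S] by (metis add.right_neutral matrix_vector_mul_lid
        matrix_vector_mult_add_rdistrib)
  then have y_supp: "supp y \<subseteq> S"
    by (simp add: supp_subset_iff_coord_proj)
  have "of_real ((norm (restrict_cols A S *v y))\<^sup>2) = cinner y (G *v y)"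
    by (simp add: cinner_self G_def cinner_ctrans flip: matrix_vector_mul_assoc)
  also have "\<dots> = 0"
    by (simp add: Gy cinner_def)
  finally have "A *v y = 0"
    by (simp add: restrict_cols_mult_vec[OF y_supp])
  then show "y = 0"
    using inj y_supp by blast
qed

lemma oracle_sol_normal_equation:
  fixes A :: "'a::rclike^'n::finite^'m::finite"
  assumes inj: "\<And>v. supp v \<subseteq> S \<Longrightarrow> A *v v = 0 \<Longrightarrow> v = 0"
  shows "supp (oracle_sol A S b) \<subseteq> S"
    and "ctrans (restrict_cols A S) *v (A *v oracle_sol A S b - b) = 0"
proof -
  define P :: "'a^'n^'n" where "P = coord_proj S"
  define AS where "AS = restrict_cols A S"
  define M where "M = ctrans AS ** AS"
  have PQ: "P + coord_proj (- S) = mat 1" "P ** coord_proj (- S) = 0" "coord_proj (- S) ** P = 0"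
    and ctrans_P: "ctrans P = P" and PP: "P ** P = P"
    by (simp_all add: P_def coord_proj_add_compl coord_proj_mult ctrans_coord_proj)
  have M: "P ** M = M" "M ** P = M"
    unfolding M_def AS_def gram_restrict_cols P_def by (metis PP P_def matrix_mul_assoc)+
  obtain B where "B ** (M + coord_proj (- S)) = mat 1"
    using gram_add_coord_proj_compl_left_invertible[OF inj] by (auto simp: M_def AS_def)
  note pinv_M = pinv_compression[OF PQ ctrans_P M this]
  define z where "z = ctrans AS *v b"
  have x: "oracle_sol A S b = pinv M *v z"
    by (simp add: oracle_sol_def M_def AS_def z_def)
  show supp: "supp (oracle_sol A S b) \<subseteq> S"
    by (simp add: supp_subset_iff_coord_proj x matrix_vector_mul_assoc pinv_M(3) flip: P_def)
  have "P *v z = z"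
    by (simp add: z_def AS_def restrict_cols_eq_mult_coord_proj ctrans_mult ctrans_P
        matrix_vector_mul_assoc matrix_mul_assoc PP flip: P_def)
  then have "ctrans AS *v (AS *v oracle_sol A S b) = ctrans AS *v b"
    by (simp add: x matrix_vector_mul_assoc matrix_mul_assoc pinv_M(1) flip: M_def z_def)
  then show "ctrans (restrict_cols A S) *v (A *v oracle_sol A S b - b) = 0"
    by (simp add: AS_def matrix_vector_mult_diff_distrib restrict_cols_mult_vec[OF supp])
qed

lemma supp_diff_subset: "supp (x - y) \<subseteq> supp x \<union> supp (y::'a::ab_group_add^'n)"
  by (auto simp: supp_def)

lemma cardv_le_card: "supp v \<subseteq> S \<Longrightarrow> cardv v \<le> card S"
  unfolding cardv_def by (simp add: card_mono)

lemma beta_le_norm_ratio: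
  "v \<noteq> 0 \<Longrightarrow> cardv v \<le> k \<Longrightarrow> beta k A \<le> ereal (norm (A *v v) / norm v)"
  unfolding beta_def by (rule INF_lower) simp

lemma eq_0_if_beta_pos:
  assumes "0 < beta k A" "cardv v \<le> k" "A *v v = 0"
  shows "v = 0"
  using beta_le_norm_ratio[of v k A] assms by (metis div_0 norm_zero not_le zero_ereal_def)

lemma norm_le_divide_beta:
  assumes "0 < beta k A" "cardv v \<le> k"
  shows "ereal (norm v) \<le> ereal (norm (A *v v)) / beta k A"
proof (cases "beta k A")
  case (real \<beta>)
  then have "0 < \<beta>"
    using assms(1) by simp
  moreover have "\<beta> * norm v \<le> norm (A *v v)"
  proof (cases "v = 0")
    case False
    then show ?thesis
      using beta_le_norm_ratio[OF False assms(2), of A] real by (simp add: pos_le_divide_eq)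
  qed simp
  ultimately show ?thesis
    using real by (simp add: pos_le_divide_eq mult.commute)
next
  case PInf
  then have "v = 0"
    using beta_le_norm_ratio[of v k A] assms(2) by force
  then show ?thesis
    using PInf by simp
qed (use assms(1) in simp)

lemma norm_nth_gt_if_ereal_dist_le:
  fixes x y :: "'a::real_normed_vector^'n::finite"
  assumes "ereal a + c < ereal (norm (y $ j))" "ereal (norm (x - y)) \<le> c"
  shows "a < norm (x $ j)"
proof (cases c)
  case (real c')
  have "norm (y $ j) \<le> norm (x $ j) + norm ((x - y) $ j)"
    using norm_triangle_ineq4[of "x $ j" "(x - y) $ j"] by simp
  also have "\<dots> \<le> norm (x $ j) + c'"
    using assms(2) Finite_Cartesian_Product.norm_nth_le[of "x - y" j] real by simp
  finally show ?thesis
    using assms(1) real by simp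
qed (use assms in simp_all)

lemma norm_vector_scalar_mult: "norm (c *s v) = norm c * norm (v::'a::real_normed_field^'n::finite)"
  unfolding norm_vec_def by (simp add: norm_mult L2_set_right_distrib)

lemma norm_mult_vec_le_colnorm_max:
  fixes A :: "'a::real_normed_field^'n::finite^'m::finite"
  shows "norm (A *v w) \<le> colnorm_max A * (\<Sum>j\<in>UNIV. norm (w $ j))"
proof -
  have "norm (A *v w) = norm (\<Sum>j\<in>UNIV. w $ j *s column j A)"
    by (simp add: matrix_mult_sum)
  also have "\<dots> \<le> (\<Sum>j\<in>UNIV. norm (w $ j) * norm (column j A))"
    by (rule norm_sum[THEN order_trans]) (simp add: norm_vector_scalar_mult)
  also have "\<dots> \<le> (\<Sum>j\<in>UNIV. norm (w $ j) * colnorm_max A)"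
    unfolding colnorm_max_def by (intro sum_mono mult_left_mono Max_ge) auto
  finally show ?thesis
    by (simp add: sum_distrib_left mult.commute)
qed

lemma quadratic_envelope_ge:
  fixes s t :: real
  assumes "0 \<le> s" "0 \<le> t"
  shows "2 * s * t - t\<^sup>2 \<le> s\<^sup>2 - (max (s - t) 0)\<^sup>2"
proof (cases "t \<le> s")
  case False
  have "0 \<le> (t - s)\<^sup>2"
    by simp
  then show ?thesis
    using False by (simp add: power2_eq_square algebra_simps)
qed (simp add: power2_eq_square algebra_simps)

lemma Q2card_increase_near:
  fixes x y :: "'a::real_normed_vector^'n::finite"
  assumes "0 \<le> \<mu>" "supp y \<subseteq> S" "\<forall>j\<in>S. sqrt \<mu> + \<delta> \<le> norm (y $ j)"
    and "norm (x - y) < \<delta>"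
  shows "(\<Sum>j\<in>-S. 2 * sqrt \<mu> * norm (x $ j) - (norm (x $ j))\<^sup>2)
    \<le> Q2card \<mu> x - Q2card \<mu> y"
proof -
  have "0 < \<delta>"
    using assms(4) norm_ge_zero[of "x - y"] by linarith
  define g where "g j = 2 * sqrt \<mu> * norm (x $ j) - (norm (x $ j))\<^sup>2" for j
  define \<phi> where "\<phi> u = \<mu> - (max (sqrt \<mu> - u) 0)\<^sup>2" for u :: real
  have "(if j \<in> S then 0 else g j) \<le> \<phi> (norm (x $ j)) - \<phi> (norm (y $ j))" for j
  proof (cases "j \<in> S")
    case True
    have "norm (y $ j) \<le> norm (x $ j) + norm ((x - y) $ j)"
      using norm_triangle_ineq4[of "x $ j" "(x - y) $ j"] by simp
    moreover have "norm ((x - y) $ j) < \<delta>"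
      using assms(4) Finite_Cartesian_Product.norm_nth_le[of "x - y" j] by simp
    ultimately have "sqrt \<mu> < norm (x $ j)" and "sqrt \<mu> < norm (y $ j)"
      using assms(3) True \<open>0 < \<delta>\<close> by force+
    then show ?thesis
      using True by (simp add: \<phi>_def)
  next
    case False
    then have "y $ j = 0"
      using assms(2) by (auto simp: supp_def)
    then show ?thesis
      using False quadratic_envelope_ge[of "sqrt \<mu>" "norm (x $ j)"] assms(1)
      by (simp add: \<phi>_def g_def)
  qed
  then have "(\<Sum>j\<in>UNIV. if j \<in> S then 0 else g j)
      \<le> (\<Sum>j\<in>UNIV. \<phi> (norm (x $ j)) - \<phi> (norm (y $ j)))"
    by (rule sum_mono)
  then show ?thesis
    by (simp add: Q2card_def \<phi>_def g_def sum_subtractf sum.If_cases Compl_eq)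
qed

lemma sq_sub_le_norm_add_sq:
  fixes p q :: "'a::real_normed_vector"
  assumes "0 \<le> R" "R \<le> norm p"
  shows "R\<^sup>2 - 2 * R * norm q \<le> (norm (p + q))\<^sup>2"
proof (cases "norm q \<le> R")
  case True
  have "R - norm q \<le> norm (p + q)"
    using assms(2) norm_diff_ineq[of p q] by simp
  then have "(R - norm q)\<^sup>2 \<le> (norm (p + q))\<^sup>2"
    using True by (intro power_mono) auto
  then show ?thesis
    by (simp add: power2_diff) (smt (verit) zero_le_power2)
next
  case False
  then have "R * (R - 2 * norm q) \<le> 0"
    using assms(1) by (intro mult_nonneg_nonpos) auto
  then have "R\<^sup>2 - 2 * R * norm q \<le> 0"
    by (simp add: power2_eq_square algebra_simps)
  then show ?thesis
    using zero_le_power2[of "norm (p + q)"] by linarith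
qed

lemma norm_sq_add_if_normal_equation:
  fixes A :: "'a::rclike^'n::finite^'m::finite"
  assumes "ctrans (restrict_cols A S) *v r = 0" "supp v \<subseteq> S"
  shows "(norm (A *v v + r))\<^sup>2 = (norm (A *v v))\<^sup>2 + (norm r)\<^sup>2"
  using norm_add_sq_if_ctrans_zero[OF assms(1), of v] restrict_cols_mult_vec[OF assms(2), of A]
  by simp

lemma residual_sq_less_on_support:
  fixes A :: "'a::rclike^'n::finite^'m::finite"
  assumes normal: "ctrans (restrict_cols A S) *v (A *v y - b) = 0"
    and inj: "\<And>v. supp v \<subseteq> S \<Longrightarrow> A *v v = 0 \<Longrightarrow> v = 0"
    and "supp x \<subseteq> S" "supp y \<subseteq> S" "x \<noteq> y"
  shows "(norm (A *v y - b))\<^sup>2 < (norm (A *v x - b))\<^sup>2"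
proof -
  have supp: "supp (x - y) \<subseteq> S"
    using assms(3,4) supp_diff_subset by blast
  then have "A *v (x - y) \<noteq> 0"
    using inj assms(5) by force
  moreover have "A *v x - b = A *v (x - y) + (A *v y - b)"
    by (simp add: matrix_vector_mult_diff_distrib)
  then have "(norm (A *v x - b))\<^sup>2 = (norm (A *v (x - y)))\<^sup>2 + (norm (A *v y - b))\<^sup>2"
    by (simp only: norm_sq_add_if_normal_equation[OF normal supp])
  ultimately show ?thesis
    by simp
qed

lemma residual_sq_ge:
  fixes A :: "'a::rclike^'n::finite^'m::finite"
  assumes normal: "ctrans (restrict_cols A S) *v (A *v y - b) = 0" and "supp y \<subseteq> S"
  shows "(norm (A *v y - b))\<^sup>2 - 2 * norm (A *v y - b) * (colnorm_max A * (\<Sum>j\<in>-S. norm (x $ j)))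
    \<le> (norm (A *v x - b))\<^sup>2"
proof -
  define u where "u = coord_proj S *v x"
  define w where "w = coord_proj (- S) *v x"
  have "x = (coord_proj S + coord_proj (- S)) *v x"
    by (simp add: coord_proj_add_compl)
  then have "x = u + w"
    by (simp add: u_def w_def matrix_vector_mult_add_rdistrib)
  then have Ax: "A *v x - b = (A *v (u - y) + (A *v y - b)) + A *v w"
    by (simp add: matrix_vector_mult_diff_distrib matrix_vector_right_distrib)
  have "supp u \<subseteq> S"
    by (simp add: u_def supp_subset_iff_coord_proj matrix_vector_mul_assoc coord_proj_mult)
  then have "supp (u - y) \<subseteq> S"
    using assms(2) supp_diff_subset by blast
  then have "(norm (A *v (u - y) + (A *v y - b)))\<^sup>2
      = (norm (A *v (u - y)))\<^sup>2 + (norm (A *v y - b))\<^sup>2"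
    by (rule norm_sq_add_if_normal_equation[OF normal])
  then have R: "norm (A *v y - b) \<le> norm (A *v (u - y) + (A *v y - b))"
    by (metis le_add_same_cancel2 norm_ge_zero power2_le_imp_le zero_le_power2)
  have "(\<Sum>j\<in>UNIV. norm (w $ j)) = (\<Sum>j\<in>UNIV. if j \<in> - S then norm (x $ j) else 0)"
    by (intro sum.cong) (simp_all add: w_def coord_proj_mult_vec)
  also have "\<dots> = (\<Sum>j\<in>-S. norm (x $ j))"
    by (simp only: sum.inter_restrict[symmetric] finite Int_UNIV_left)
  finally have "norm (A *v w) \<le> colnorm_max A * (\<Sum>j\<in>-S. norm (x $ j))"
    using norm_mult_vec_le_colnorm_max[of A w] by simp
  then have "2 * norm (A *v y - b) * norm (A *v w)
      \<le> 2 * norm (A *v y - b) * (colnorm_max A * (\<Sum>j\<in>-S. norm (x $ j)))"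
    by (intro mult_left_mono) auto
  then show ?thesis
    unfolding Ax using sq_sub_le_norm_add_sq[OF norm_ge_zero R, of "A *v w"] by linarith
qed

lemma Kreg_less_near:
  fixes A :: "'a::rclike^'n::finite^'m::finite"
  assumes "0 \<le> \<mu>" and y_supp: "supp y \<subseteq> S"
    and inj: "\<And>v. supp v \<subseteq> S \<Longrightarrow> A *v v = 0 \<Longrightarrow> v = 0"
    and normal: "ctrans (restrict_cols A S) *v (A *v y - b) = 0"
    and gap: "\<forall>j\<in>S. sqrt \<mu> + \<delta> \<le> norm (y $ j)"
    and \<delta>_le: "\<delta> \<le> 2 * (sqrt \<mu> - norm (A *v y - b) * colnorm_max A)"
    and near: "norm (x - y) < \<delta>" and "x \<noteq> y"
  shows "Kreg \<mu> A b y < Kreg \<mu> A b x"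
proof -
  define g where "g j = 2 * sqrt \<mu> * norm (x $ j) - (norm (x $ j))\<^sup>2" for j
  have Q: "(\<Sum>j\<in>-S. g j) \<le> Q2card \<mu> x - Q2card \<mu> y"
    unfolding g_def using assms(1) y_supp gap near by (rule Q2card_increase_near)
  show ?thesis
  proof (cases "supp x \<subseteq> S")
    case True
    then have "x $ j = 0" if "j \<notin> S" for j
      using that unfolding supp_def by blast
    then have "(\<Sum>j\<in>-S. g j) = 0"
      by (simp add: g_def)
    then show ?thesis
      using Q residual_sq_less_on_support[OF normal inj True y_supp \<open>x \<noteq> y\<close>]
      by (simp add: Kreg_def)
  next
    case False
    then obtain j where "j \<notin> S" "x $ j \<noteq> 0"
      by (auto simp: supp_def)
    define d where "d = 2 * (sqrt \<mu> - norm (A *v y - b) * colnorm_max A)"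
    have "norm (x $ i) < d" if "i \<notin> S" for i
    proof -
      have "y $ i = 0"
        using that y_supp by (auto simp: supp_def)
      then show ?thesis
        using near \<delta>_le Finite_Cartesian_Product.norm_nth_le[of "x - y" i] by (simp add: d_def)
    qed
    then have "0 < (\<Sum>i\<in>-S. norm (x $ i) * (d - norm (x $ i)))"
      using \<open>j \<notin> S\<close> \<open>x $ j \<noteq> 0\<close> by (intro sum_pos2[of _ j]) (auto simp: less_imp_le)
    also have "\<dots> = (\<Sum>i\<in>-S. g i)
        - 2 * norm (A *v y - b) * (colnorm_max A * (\<Sum>i\<in>-S. norm (x $ i)))"
      by (simp add: g_def d_def sum_subtractf sum_distrib_left sum.distrib power2_eq_square
          algebra_simps)
    finally show ?thesis
      using Q residual_sq_ge[OF normal y_supp, of x] by (simp add: Kreg_def)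
  qed
qed

lemma strict_local_min_Kreg:
  fixes A :: "'a::rclike^'n::finite^'m::finite"
  assumes "0 < \<mu>" and y_supp: "supp y \<subseteq> S" and y_big: "\<forall>j\<in>S. sqrt \<mu> < norm (y $ j)"
    and inj: "\<And>v. supp v \<subseteq> S \<Longrightarrow> A *v v = 0 \<Longrightarrow> v = 0"
    and normal: "ctrans (restrict_cols A S) *v (A *v y - b) = 0"
    and small: "norm (A *v y - b) * colnorm_max A < sqrt \<mu>"
  shows "strict_local_min (Kreg \<mu> A b) y"
proof -
  define d where "d = 2 * (sqrt \<mu> - norm (A *v y - b) * colnorm_max A)"
  define \<delta> where "\<delta> = Min (insert d ((\<lambda>j. norm (y $ j) - sqrt \<mu>) ` S))"
  have "0 < \<delta>"
    using small y_big by (simp add: \<delta>_def d_def)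
  have "\<delta> \<le> d"
    by (simp add: \<delta>_def)
  have "\<delta> \<le> norm (y $ j) - sqrt \<mu>" if "j \<in> S" for j
    unfolding \<delta>_def using that by (intro Min_le) auto
  then have gap: "\<forall>j\<in>S. sqrt \<mu> + \<delta> \<le> norm (y $ j)"
    by force
  have "Kreg \<mu> A b y < Kreg \<mu> A b x" if "x \<noteq> y" "dist x y < \<delta>" for x
    using assms(1) y_supp inj normal gap \<open>\<delta> \<le> d\<close> that
    by (intro Kreg_less_near) (auto simp: d_def dist_norm)
  then show ?thesis
    unfolding strict_local_min_def using \<open>0 < \<delta>\<close> by blast
qed

lemma least_squares_error_bounds:
  fixes A :: "'a::rclike^'n::finite^'m::finite"
  assumes beta: "0 < beta (card S) A" and "supp x0 \<subseteq> S" "supp x \<subseteq> S"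
    and b: "b = A *v x0 + \<epsilon>"
    and normal: "ctrans (restrict_cols A S) *v (A *v x - b) = 0"
  shows "norm (A *v x - b) \<le> norm \<epsilon>"
    and "ereal (norm (x - x0)) \<le> ereal (norm \<epsilon>) / beta (card S) A"
proof -
  have diff_supp: "supp (x0 - x) \<subseteq> S"
    using supp_diff_subset[of x0 x] assms(2,3) by blast
  have "- \<epsilon> = A *v (x0 - x) + (A *v x - b)"
    by (simp add: b matrix_vector_mult_diff_distrib)
  then have pythagoras: "(norm \<epsilon>)\<^sup>2 = (norm (A *v (x0 - x)))\<^sup>2 + (norm (A *v x - b))\<^sup>2"
    using norm_sq_add_if_normal_equation[OF normal diff_supp] by (metis norm_minus_cancel)
  show "norm (A *v x - b) \<le> norm \<epsilon>"
    by (rule power2_le_imp_le) (simp_all add: pythagoras)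
  have "norm (A *v (x0 - x)) \<le> norm \<epsilon>"
    by (rule power2_le_imp_le) (simp_all add: pythagoras)
  have "ereal (norm (x0 - x)) \<le> ereal (norm (A *v (x0 - x))) / beta (card S) A"
    using norm_le_divide_beta[OF beta] cardv_le_card[OF diff_supp] by simp
  also have "\<dots> \<le> ereal (norm \<epsilon>) / beta (card S) A"
    using \<open>norm (A *v (x0 - x)) \<le> norm \<epsilon>\<close> beta by (intro ereal_divide_right_mono) simp_all
  finally show "ereal (norm (x - x0)) \<le> ereal (norm \<epsilon>) / beta (card S) A"
    by (simp add: norm_minus_commute)
qed

theorem proposition4p6:
  fixes A :: "'a::rclike^'n::finite^'m::finite"
    and x0 :: "'a^'n" and \<epsilon> b :: "'a^'m" and \<mu> :: real
    and S :: "'n set" and K :: nat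
  assumes "colnorm_max A \<le> 1"
    and "\<mu> > 0"
    and "S = supp x0" and "K = card S"
    and "b = A *v x0 + \<epsilon>"
    and "beta K A > 0"
    and "norm \<epsilon> < sqrt \<mu>"
    and "\<forall>j\<in>S. ereal (norm (x0 $ j)) > ereal (sqrt \<mu>) + ereal (norm \<epsilon>) / beta K A"
  shows "strict_local_min (Kreg \<mu> A b) (oracle_sol A S b)
       \<and> supp (oracle_sol A S b) = supp x0
       \<and> (\<forall>j\<in>S. norm (oracle_sol A S b $ j) > sqrt \<mu>)
       \<and> norm (A *v oracle_sol A S b - b) \<le> norm \<epsilon>
       \<and> ereal (norm (oracle_sol A S b - x0)) \<le> ereal (norm \<epsilon>) / beta K A"
proof -
  define x where "x = oracle_sol A S b"
  have beta: "0 < beta (card S) A"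
    using assms(4,6) by simp
  have inj: "v = 0" if "supp v \<subseteq> S" "A *v v = 0" for v
    using cardv_le_card[OF that(1)] that(2) by (intro eq_0_if_beta_pos[OF beta]) simp_all
  note normal = oracle_sol_normal_equation[where A = A and S = S and b = b, OF inj, folded x_def]
  have "supp x0 \<subseteq> S"
    using assms(3) by simp
  note bounds = least_squares_error_bounds[OF beta this normal(1) assms(5) normal(2)]
  have big: "\<forall>j\<in>S. sqrt \<mu> < norm (x $ j)"
    using assms(8) norm_nth_gt_if_ereal_dist_le[OF _ bounds(2)] unfolding assms(4) by blast
  then have "S \<subseteq> supp x"
    using assms(2) by (fastforce simp: supp_def)
  then have supp_eq: "supp x = supp x0"
    using normal(1) assms(3) by blast
  have "norm (A *v x - b) * colnorm_max A < sqrt \<mu>"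
    using mult_left_le[OF assms(1) norm_ge_zero[of "A *v x - b"]] bounds(1) assms(7) by linarith
  then have "strict_local_min (Kreg \<mu> A b) x"
    using strict_local_min_Kreg[OF assms(2) normal(1) big _ normal(2)] inj by blast
  then show ?thesis
    using supp_eq big bounds[folded assms(4)] unfolding x_def by blast
qed

end
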